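(* Let $X$ be a metric space with bounded geometry which is a coarse disjoint union of a sequence of asymptotic expanders. Then $X$ is not uniformly locally amenable. In particular, $X$ does not have Property A.
   Context: Bounded geometry: $\sup_x|B(x,R)|<\infty$ for all $R>0$. A coarse disjoint union of finite metric spaces $(X_n,d_n)$ is $X=\bigsqcup_nX_n$ with a metric restricting to $d_n$ on each $X_n$ and with $d(X_n,X_m)\to\infty$ as $n+m\to\infty$, $m\neq n$. For $A$ in a metric space, $\partial_RA=\{x\notin A: d(x,A)\leq R\}$. A sequence of finite metric spaces $\{X_n\}$ with $|X_n|\to\infty$ is a sequence of asymptotic expanders if for every $\alpha>0$ there exist $c\in(0,1)$, $R>0$ such that for all $n$ and all $A\subseteq X_n$ with $\alpha|X_n|\leq|A|\leq|X_n|/2$, $|\partial_RA|>c|A|$. $X$ is uniformly locally amenable if for all $R,\varepsilon>0$ there is $S>0$ such that for every finite $F\subseteq X$ there is $E\subseteq X$ with $\mathrm{diam}(E)\leq S$ and $|\partial_R(E)\cap F|<\varepsilon|E\cap F|$. Property A is Yu's property; for bounded geometry spaces it is equivalent to: for all $R,\varepsilon>0$ there are $\xi:X\to\ell^2(X)$ and $S>0$ with $\|\xi_x\|=1$, $\|\xi_x-\xi_y\|<\varepsilon$ whenever $d(x,y)<R$, and $\mathrm{supp}(\xi_x)\subseteq B(x,S)$. *)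

theory Defs
  imports "HOL-Analysis.Analysis"
begin

text \<open>The metric space X is the whole type 'a (class metric_space).\<close>

definition bounded_geometry :: "'a::metric_space itself \<Rightarrow> bool" where
  "bounded_geometry _ \<longleftrightarrow>
     (\<forall>R>0. \<exists>N::nat. \<forall>x::'a. finite (cball x R) \<and> card (cball x R) \<le> N)"

text \<open>R-boundary of A inside the ambient set S: points of S outside A at distance at most R from A
  (the distance to the empty set is +infinity, so the boundary of the empty set is empty).\<close>
definition rbdry :: "'a::metric_space set \<Rightarrow> real \<Rightarrow> 'a set \<Rightarrow> 'a set" where
  "rbdry S R A = {x \<in> S. x \<notin> A \<and> A \<noteq> {} \<and> infdist x A \<le> R}"

definition coarse_disjoint_union :: "(nat \<Rightarrow> 'a::metric_space set) \<Rightarrow> bool" where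
  "coarse_disjoint_union Xs \<longleftrightarrow>
     (\<Union>n. Xs n) = UNIV \<and> (\<forall>n. finite (Xs n)) \<and>
     (\<forall>n m. n \<noteq> m \<longrightarrow> Xs n \<inter> Xs m = {}) \<and>
     (\<forall>D::real. \<exists>N. \<forall>n m. n \<noteq> m \<and> n + m \<ge> N \<longrightarrow>
         (\<forall>x\<in>Xs n. \<forall>y\<in>Xs m. D \<le> dist x y))"

definition asymptotic_expanders :: "(nat \<Rightarrow> 'a::metric_space set) \<Rightarrow> bool" where
  "asymptotic_expanders Xs \<longleftrightarrow>
     (\<forall>n. finite (Xs n)) \<and>
     filterlim (\<lambda>n. card (Xs n)) at_top sequentially \<and>
     (\<forall>\<alpha>::real>0. \<exists>c::real. 0 < c \<and> c < 1 \<and> (\<exists>R::real>0. \<forall>n. \<forall>A. A \<subseteq> Xs n \<longrightarrow>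
        \<alpha> * real (card (Xs n)) \<le> real (card A) \<longrightarrow> real (card A) \<le> real (card (Xs n)) / 2 \<longrightarrow>
        real (card (rbdry (Xs n) R A)) > c * real (card A)))"

definition uniformly_locally_amenable :: "'a::metric_space itself \<Rightarrow> bool" where
  "uniformly_locally_amenable _ \<longleftrightarrow>
     (\<forall>R>0. \<forall>\<epsilon>>0. \<exists>S>0. \<forall>F::'a set. finite F \<and> F \<noteq> {} \<longrightarrow>
        (\<exists>E. bounded E \<and> diameter E \<le> S \<and>
             real (card (rbdry UNIV R E \<inter> F)) < \<epsilon> * real (card (E \<inter> F))))"

definition l2norm :: "('a \<Rightarrow> real) \<Rightarrow> real" where
  "l2norm f = sqrt (infsum (\<lambda>z. (f z)\<^sup>2) UNIV)"

definition property_A :: "'a::metric_space itself \<Rightarrow> bool" where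
  "property_A _ \<longleftrightarrow>
     (\<forall>R>0. \<forall>\<epsilon>>0. \<exists>(\<xi>::'a \<Rightarrow> 'a \<Rightarrow> real) S. S > 0 \<and>
        (\<forall>x. (\<lambda>z. (\<xi> x z)\<^sup>2) summable_on UNIV \<and> l2norm (\<xi> x) = 1) \<and>
        (\<forall>x y. dist x y < R \<longrightarrow> l2norm (\<lambda>z. \<xi> x z - \<xi> y z) < \<epsilon>) \<and>
        (\<forall>x. {z. \<xi> x z \<noteq> 0} \<subseteq> ball x S))"

end

theory Submission
  imports Defs
begin

text \<open>
  Property A implies uniform local amenability. Each \<open>\<xi> x\<close> gives a probability vector
  \<open>z \<mapsto> (\<xi> x z)\<^sup>2\<close> supported in \<open>ball x S\<close>. For a finite set \<open>F\<close>, integrate over the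
  level \<open>t\<close> and sum over the centre \<open>z\<close> the superlevel sets \<open>{x. t \<le> (\<xi> x z)\<^sup>2}\<close>, all of
  diameter at most \<open>2 S\<close>: their traces on \<open>F\<close> have total size \<open>|F|\<close>, while their
  \<open>R\<close>-boundaries have total size at most the sum over \<open>x \<in> F\<close> and \<open>y \<in> cball x R\<close> of the
  \<open>\<ell>\<^sup>1\<close>-distances of these vectors, which is small. Hence one level set has small relative
  boundary.

  Uniform local amenability contradicts expansion. Inside one large piece \<open>X\<close>, grow a set
  \<open>A\<close> greedily by adjoining \<open>E \<inter> (X - A)\<close>, where \<open>E\<close> has diameter at most \<open>S\<close> and small
  boundary relative to \<open>X - A\<close>; this preserves \<open>|\<partial>\<^sub>R A| \<le> c |A|\<close>. By bounded geometry each
  step adds at most \<open>N\<close> points, so \<open>A\<close> can be stopped with \<open>|X|/4 \<le> |A| \<le> |X|/2\<close>, where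
  expansion forbids such a small boundary.
\<close>

lemma sum_indicator_eq_card_real:
  assumes "finite A"
  shows "(\<Sum>x\<in>A. indicator B x :: real) = real (card (A \<inter> B))"
  using assms by (simp add: indicator_def sum.If_cases)

lemma bounded_geometryE:
  assumes "bounded_geometry TYPE('a::metric_space)" "0 < R"
  obtains N where "\<And>x::'a. finite (cball x R)" "\<And>x::'a. card (cball x R) \<le> N"
  using assms unfolding bounded_geometry_def by blast

lemma infdist_attains_inf_finite:
  fixes x :: "'a::metric_space"
  assumes "finite A" "A \<noteq> {}"
  obtains a where "a \<in> A" "infdist x A = dist x a"
proof -
  have "Min (dist x ` A) \<in> dist x ` A"
    using assms by (intro Min_in) auto
  then obtain a where a: "a \<in> A" "dist x a = Min (dist x ` A)"
    by auto
  have "dist x a \<le> infdist x A"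
    using assms a by (auto simp: infdist_notempty intro!: cINF_greatest)
  with infdist_le[OF \<open>a \<in> A\<close>, of x] that a show ?thesis by simp
qed

lemma diameter_le_if_subset_ball:
  fixes E :: "'a::metric_space set"
  assumes "E \<subseteq> ball z S" "0 \<le> S"
  shows "diameter E \<le> 2 * S"
proof (cases "E = {}")
  case False
  have "dist a b \<le> 2 * S" if "a \<in> E" "b \<in> E" for a b
  proof -
    have "dist z a < S" "dist z b < S" using assms that by auto
    moreover have "dist a b \<le> dist z a + dist z b"
      using dist_triangle2[of a b z] by (simp add: dist_commute)
    ultimately show ?thesis by linarith
  qed
  with False show ?thesis by (auto simp: diameter_def intro!: cSUP_least)
qed (use assms in simp)

lemma finite_card_le_if_diameter_le:
  fixes E :: "'a::metric_space set"
  assumes "bounded E" "diameter E \<le> S"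
    and "\<And>x::'a. finite (cball x S)" "\<And>x::'a. card (cball x S) \<le> N"
  shows "finite E \<and> card E \<le> N"
proof (cases "E = {}")
  case False
  then obtain e where "e \<in> E" by blast
  with assms(1,2) have "E \<subseteq> cball e S"
    by (auto dest: diameter_bounded_bound)
  with assms(3,4)[of e] show ?thesis
    by (meson card_mono finite_subset order_trans)
qed simp

lemma rbdry_Un_subset: "rbdry S R (A \<union> B) \<subseteq> rbdry S R A \<union> rbdry S R B"
proof
  fix x assume x: "x \<in> rbdry S R (A \<union> B)"
  show "x \<in> rbdry S R A \<union> rbdry S R B"
  proof (cases "A = {} \<or> B = {}")
    case False
    with x infdist_Un_min[of A B x] show ?thesis by (auto simp: rbdry_def min_le_iff_disj)
  qed (use x in auto)
qed

lemma rbdry_Int_subset: "rbdry S R (E \<inter> T) \<inter> T \<subseteq> rbdry UNIV R E \<inter> T"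
proof
  fix x assume x: "x \<in> rbdry S R (E \<inter> T) \<inter> T"
  then have "infdist x E \<le> infdist x (E \<inter> T)"
    by (intro infdist_mono) (auto simp: rbdry_def)
  with x show "x \<in> rbdry UNIV R E \<inter> T" by (auto simp: rbdry_def)
qed

lemma small_boundary_subset_grow:
  fixes X :: "'a::metric_space set"
  assumes "finite X"
    and N: "\<And>x::'a. finite (cball x S)" "\<And>x::'a. card (cball x S) \<le> N"
    and amenable: "\<And>F. F \<subseteq> X \<Longrightarrow> F \<noteq> {} \<Longrightarrow> \<exists>E. bounded E \<and> diameter E \<le> S \<and>
        real (card (rbdry UNIV R E \<inter> F)) < c * real (card (E \<inter> F))"
    and A: "A \<subseteq> X" "real (card (rbdry X R A)) \<le> c * real (card A)" "A \<noteq> X"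
  obtains A' where "A' \<subseteq> X" "real (card (rbdry X R A')) \<le> c * real (card A')"
    "card A < card A'" "card A' \<le> card A + N"
proof -
  define F where "F = X - A"
  have "F \<subseteq> X" "F \<noteq> {}" using A unfolding F_def by auto
  then obtain E where E: "bounded E" "diameter E \<le> S"
    and E_small: "real (card (rbdry UNIV R E \<inter> F)) < c * real (card (E \<inter> F))"
    using amenable by blast
  define B where "B = E \<inter> F"
  have "finite E" "card E \<le> N"
    using finite_card_le_if_diameter_le[OF E N] by auto
  moreover have "card B \<le> card E"
    unfolding B_def using \<open>finite E\<close> by (intro card_mono) auto
  ultimately have "finite B" "card B \<le> N"
    unfolding B_def by auto
  have "B \<noteq> {}" using E_small unfolding B_def by (auto simp: mult_le_0_iff)
  have "finite A" using A \<open>finite X\<close> finite_subset by auto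
  have card_AB: "card (A \<union> B) = card A + card B"
    using \<open>finite A\<close> \<open>finite B\<close> by (intro card_Un_disjoint) (auto simp: B_def F_def)
  have "rbdry X R (A \<union> B) \<subseteq> rbdry X R A \<union> (rbdry X R B \<inter> F)"
    using rbdry_Un_subset[of X R A B] unfolding F_def by (auto simp: rbdry_def)
  also have "\<dots> \<subseteq> rbdry X R A \<union> (rbdry UNIV R E \<inter> F)"
    using rbdry_Int_subset[of X R E F] unfolding B_def by (rule Un_mono[OF order_refl])
  finally have "card (rbdry X R (A \<union> B)) \<le> card (rbdry X R A \<union> (rbdry UNIV R E \<inter> F))"
    using \<open>finite X\<close> unfolding F_def by (intro card_mono) (auto simp: rbdry_def)
  also have "\<dots> \<le> card (rbdry X R A) + card (rbdry UNIV R E \<inter> F)"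
    by (rule card_Un_le)
  finally have "card (rbdry X R (A \<union> B)) \<le> card (rbdry X R A) + card (rbdry UNIV R E \<inter> F)" .
  then have "real (card (rbdry X R (A \<union> B))) \<le> c * real (card A) + c * real (card B)"
    using A(2) E_small unfolding B_def by linarith
  then have "real (card (rbdry X R (A \<union> B))) \<le> c * real (card (A \<union> B))"
    by (simp add: card_AB distrib_left)
  moreover have "A \<union> B \<subseteq> X" using A(1) unfolding B_def F_def by blast
  moreover have "card A < card (A \<union> B)" "card (A \<union> B) \<le> card A + N"
    using card_AB \<open>finite B\<close> \<open>B \<noteq> {}\<close> \<open>card B \<le> N\<close> by auto
  ultimately show ?thesis using that by blast
qed

lemma small_boundary_subset_exists:
  fixes X :: "'a::metric_space set"
  assumes "finite X"
    and N: "\<And>x::'a. finite (cball x S)" "\<And>x::'a. card (cball x S) \<le> N"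
    and amenable: "\<And>F. F \<subseteq> X \<Longrightarrow> F \<noteq> {} \<Longrightarrow> \<exists>E. bounded E \<and> diameter E \<le> S \<and>
        real (card (rbdry UNIV R E \<inter> F)) < c * real (card (E \<inter> F))"
    and "k \<le> card X"
  shows "\<exists>A \<subseteq> X. real (card (rbdry X R A)) \<le> c * real (card A) \<and> k \<le> card A \<and> card A \<le> k + N"
  using \<open>k \<le> card X\<close>
proof (induction k)
  case 0
  have "rbdry X R {} = {}" by (simp add: rbdry_def)
  then show ?case by force
next
  case (Suc k)
  then obtain A where A: "A \<subseteq> X" "real (card (rbdry X R A)) \<le> c * real (card A)"
    "k \<le> card A" "card A \<le> k + N" by auto
  show ?case
  proof (cases "card A = k")
    case True
    with Suc.prems have "A \<noteq> X" by auto
    then obtain A' where "A' \<subseteq> X" "real (card (rbdry X R A')) \<le> c * real (card A')"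
      "card A < card A'" "card A' \<le> card A + N"
      using small_boundary_subset_grow[OF \<open>finite X\<close> N amenable A(1,2)] by blast
    with True show ?thesis by (intro exI[of _ A']) auto
  next
    case False
    with A show ?thesis by (intro exI[of _ A]) auto
  qed
qed

lemma asymptotic_expandersE:
  assumes "asymptotic_expanders Xs" "0 < \<alpha>"
  obtains c R where "0 < c" "0 < R"
    "\<And>n A. A \<subseteq> Xs n \<Longrightarrow> \<alpha> * real (card (Xs n)) \<le> real (card A) \<Longrightarrow>
      real (card A) \<le> real (card (Xs n)) / 2 \<Longrightarrow> c * real (card A) < real (card (rbdry (Xs n) R A))"
  using assms unfolding asymptotic_expanders_def by metis

lemma uniformly_locally_amenableE:
  assumes "uniformly_locally_amenable TYPE('a::metric_space)" "0 < R" "0 < \<epsilon>"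
  obtains S where "0 < S"
    "\<And>F::'a set. finite F \<Longrightarrow> F \<noteq> {} \<Longrightarrow> \<exists>E. bounded E \<and> diameter E \<le> S \<and>
      real (card (rbdry UNIV R E \<inter> F)) < \<epsilon> * real (card (E \<inter> F))"
  using assms unfolding uniformly_locally_amenable_def by metis

lemma not_uniformly_locally_amenable_if_asymptotic_expanders:
  fixes Xs :: "nat \<Rightarrow> 'a::metric_space set"
  assumes bg: "bounded_geometry TYPE('a)" and expanders: "asymptotic_expanders Xs"
  shows "\<not> uniformly_locally_amenable TYPE('a)"
proof
  assume "uniformly_locally_amenable TYPE('a)"
  obtain c R where "0 < c" "0 < R" and expansion:
    "\<And>n A. A \<subseteq> Xs n \<Longrightarrow> 1/4 * real (card (Xs n)) \<le> real (card A) \<Longrightarrow>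
      real (card A) \<le> real (card (Xs n)) / 2 \<Longrightarrow> c * real (card A) < real (card (rbdry (Xs n) R A))"
    using asymptotic_expandersE[OF expanders, of "1/4"] by auto
  obtain S where "0 < S" and amenable: "\<And>F::'a set. finite F \<Longrightarrow> F \<noteq> {} \<Longrightarrow>
      \<exists>E. bounded E \<and> diameter E \<le> S \<and> real (card (rbdry UNIV R E \<inter> F)) < c * real (card (E \<inter> F))"
    using uniformly_locally_amenableE[OF \<open>uniformly_locally_amenable TYPE('a)\<close> \<open>0 < R\<close> \<open>0 < c\<close>]
    by blast
  obtain N where N: "\<And>x::'a. finite (cball x S)" "\<And>x::'a. card (cball x S) \<le> N"
    using bounded_geometryE[OF bg \<open>0 < S\<close>] by blast
  have "filterlim (\<lambda>n. card (Xs n)) at_top sequentially"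
    using expanders unfolding asymptotic_expanders_def by blast
  then obtain n where large: "4 * N + 4 \<le> card (Xs n)"
    unfolding filterlim_at_top eventually_sequentially by blast
  define X where "X = Xs n"
  \<comment> \<open>Start the greedy growth at \<open>|X|/4\<close>; it overshoots by at most \<open>N \<le> |X|/4 - 1\<close>.\<close>
  define k where "k = card X div 4 + 1"
  have "finite X" using expanders unfolding asymptotic_expanders_def X_def by blast
  have k: "card X \<le> 4 * k" "4 * k \<le> card X + 4" unfolding k_def by presburger+
  with large have "k \<le> card X" unfolding X_def by linarith
  then obtain A where "A \<subseteq> X" and small: "real (card (rbdry X R A)) \<le> c * real (card A)"
    and "k \<le> card A" "card A \<le> k + N"
    using small_boundary_subset_exists[OF \<open>finite X\<close> N] amenable \<open>finite X\<close>
    by (metis finite_subset)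
  then have "card X \<le> 4 * card A" "2 * card A \<le> card X"
    using k large unfolding X_def by linarith+
  then have "c * real (card A) < real (card (rbdry X R A))"
    using expansion[OF \<open>A \<subseteq> X\<close>[unfolded X_def]] unfolding X_def by simp
  with small show False by linarith
qed

lemma l2norm_eq_L2_set:
  assumes "finite K" "{z. h z \<noteq> 0} \<subseteq> K"
  shows "l2norm h = L2_set h K"
proof -
  have "infsum (\<lambda>z. (h z)\<^sup>2) UNIV = infsum (\<lambda>z. (h z)\<^sup>2) K"
    using assms(2) by (intro infsum_cong_neutral) auto
  with assms(1) show ?thesis by (simp add: l2norm_def L2_set_def)
qed

lemma sum_abs_diff_squares_le:
  assumes "L2_set a K = 1" "L2_set b K = 1"
  shows "(\<Sum>z\<in>K. \<bar>(a z)\<^sup>2 - (b z)\<^sup>2\<bar>) \<le> 2 * L2_set (\<lambda>z. a z - b z) K"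
proof -
  have "(\<Sum>z\<in>K. \<bar>(a z)\<^sup>2 - (b z)\<^sup>2\<bar>) = (\<Sum>z\<in>K. \<bar>a z - b z\<bar> * \<bar>a z + b z\<bar>)"
    by (simp add: abs_mult[symmetric] power2_eq_square algebra_simps)
  also have "\<dots> \<le> L2_set (\<lambda>z. a z - b z) K * L2_set (\<lambda>z. a z + b z) K"
    by (rule L2_set_mult_ineq)
  also have "\<dots> \<le> L2_set (\<lambda>z. a z - b z) K * 2"
    using L2_set_triangle_ineq[of a b K] assms by (intro mult_left_mono) auto
  finally show ?thesis by simp
qed

lemma sum_squares_eq_l2norm:
  assumes "finite K" "{z. h z \<noteq> 0} \<subseteq> K"
  shows "(\<Sum>z\<in>K. (h z)\<^sup>2) = (l2norm h)\<^sup>2"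
  using l2norm_eq_L2_set[OF assms] by (simp add: L2_set_def sum_nonneg)

lemma sum_max_diff_squares_le:
  fixes a b :: "'b \<Rightarrow> real"
  assumes "finite Z" "finite {z. a z \<noteq> 0}" "finite {z. b z \<noteq> 0}" "l2norm a = 1" "l2norm b = 1"
  shows "(\<Sum>z\<in>Z. max ((b z)\<^sup>2 - (a z)\<^sup>2) 0) \<le> 2 * l2norm (\<lambda>z. a z - b z)"
proof -
  define K where "K = {z. a z \<noteq> 0} \<union> {z. b z \<noteq> 0}"
  have "finite K" using assms(2,3) unfolding K_def by blast
  have K_norm: "l2norm h = L2_set h K" if "{z. h z \<noteq> 0} \<subseteq> K" for h
    using l2norm_eq_L2_set[OF \<open>finite K\<close> that] .
  have "L2_set a K = 1" "L2_set b K = 1"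
    using K_norm[of a] K_norm[of b] assms(4,5) unfolding K_def by auto
  have "(\<Sum>z\<in>Z. max ((b z)\<^sup>2 - (a z)\<^sup>2) 0) \<le> (\<Sum>z\<in>Z \<union> K. max ((b z)\<^sup>2 - (a z)\<^sup>2) 0)"
    using assms(1) \<open>finite K\<close> by (intro sum_mono2) auto
  also have "\<dots> = (\<Sum>z\<in>K. max ((b z)\<^sup>2 - (a z)\<^sup>2) 0)"
    using assms(1) \<open>finite K\<close> by (intro sum.mono_neutral_right) (auto simp: K_def)
  also have "\<dots> \<le> (\<Sum>z\<in>K. \<bar>(a z)\<^sup>2 - (b z)\<^sup>2\<bar>)"
    by (intro sum_mono) auto
  also have "\<dots> \<le> 2 * l2norm (\<lambda>z. a z - b z)"
  proof -
    have "{z. a z - b z \<noteq> 0} \<subseteq> K" unfolding K_def by auto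
    with sum_abs_diff_squares_le[OF \<open>L2_set a K = 1\<close> \<open>L2_set b K = 1\<close>] show ?thesis
      by (simp add: K_norm)
  qed
  finally show ?thesis .
qed

lemma integrable_indicator_Ioc [simp]:
  "integrable lborel (indicator {a<..b::real} :: real \<Rightarrow> real)"
  by (cases "a \<le> b") auto

lemma integral_indicator_Ioc:
  "integral\<^sup>L lborel (indicator {a<..b::real} :: real \<Rightarrow> real) = max (b - a) 0"
  by (cases "a \<le> b") auto

lemma card_superlevel_set_eq_sum:
  fixes g :: "'a \<Rightarrow> real"
  assumes "finite F" "0 < t"
  shows "real (card ({x. t \<le> g x} \<inter> F)) = (\<Sum>x\<in>F. indicator {0<..g x} t)"
proof -
  have "(\<Sum>x\<in>F. indicator {0<..g x} t) = (\<Sum>x\<in>F. indicator {x. t \<le> g x} x :: real)"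
    using assms(2) by (intro sum.cong) (auto simp: indicator_def)
  with assms(1) show ?thesis by (simp add: sum_indicator_eq_card_real Int_commute)
qed

lemma card_rbdry_superlevel_set_le:
  fixes g :: "'a::metric_space \<Rightarrow> real"
  assumes "finite F" "finite {x. t \<le> g x}" "\<And>x::'a. finite (cball x R)"
  shows "real (card (rbdry UNIV R {x. t \<le> g x} \<inter> F))
    \<le> (\<Sum>x\<in>F. \<Sum>y\<in>cball x R. indicator {g x<..g y} t)"
proof -
  define E where "E = {x. t \<le> g x}"
  have "real (card (rbdry UNIV R E \<inter> F)) = (\<Sum>x\<in>F. indicator (rbdry UNIV R E) x)"
    using assms(1) by (simp add: sum_indicator_eq_card_real Int_commute)
  also have "\<dots> \<le> (\<Sum>x\<in>F. \<Sum>y\<in>cball x R. indicator {g x<..g y} t)"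
  proof (rule sum_mono)
    fix x
    show "indicator (rbdry UNIV R E) x \<le> (\<Sum>y\<in>cball x R. indicator {g x<..g y} t :: real)"
    proof (cases "x \<in> rbdry UNIV R E")
      case True
      then have "x \<notin> E" "E \<noteq> {}" "infdist x E \<le> R" by (auto simp: rbdry_def)
      moreover obtain y where "y \<in> E" "infdist x E = dist x y"
        using infdist_attains_inf_finite assms(2) \<open>E \<noteq> {}\<close> unfolding E_def by blast
      ultimately have "y \<in> cball x R" "indicator {g x<..g y} t = (1::real)"
        by (auto simp: E_def indicator_def)
      with True assms(3)[of x] show ?thesis
        using member_le_sum[of y "cball x R" "\<lambda>y. indicator {g x<..g y} t :: real"] by auto
    qed (simp add: sum_nonneg)
  qed
  finally show ?thesis unfolding E_def .
qed

lemma exists_superlevel_set_small_boundary: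
  fixes g :: "'z \<Rightarrow> 'a::metric_space \<Rightarrow> real"
  assumes "finite Z" "finite F" "F \<noteq> {}"
    and nonneg: "\<And>z x. 0 \<le> g z x"
    and finite_superlevel: "\<And>z t. 0 < t \<Longrightarrow> finite {x. t \<le> g z x}"
    and finite_cball: "\<And>x::'a. finite (cball x R)"
    and transport: "\<And>x. x \<in> F \<Longrightarrow>
      (\<Sum>y\<in>cball x R. \<Sum>z\<in>Z. max (g z y - g z x) 0) < \<epsilon> * (\<Sum>z\<in>Z. g z x)"
  shows "\<exists>z t. 0 < t \<and>
    real (card (rbdry UNIV R {x. t \<le> g z x} \<inter> F)) < \<epsilon> * real (card ({x. t \<le> g z x} \<inter> F))"
proof -
  \<comment> \<open>Layer cake: \<open>L t\<close> bounds the level-set counts at height \<open>t\<close> from below, and integrating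
    the indicators over \<open>t\<close> turns them into the values of \<open>g\<close> and their positive differences.\<close>
  define L where "L = (\<lambda>t. \<Sum>z\<in>Z. \<Sum>x\<in>F. \<epsilon> * indicator {0<..g z x} t
    - (\<Sum>y\<in>cball x R. indicator {g z x<..g z y} t))"
  have "integral\<^sup>L lborel L
      = (\<Sum>z\<in>Z. \<Sum>x\<in>F. \<epsilon> * g z x - (\<Sum>y\<in>cball x R. max (g z y - g z x) 0))"
    using nonneg
    by (simp add: L_def integral_sum integral_diff integral_indicator_Ioc
        del: Bochner_Integration.integral_indicator)
  also have "\<dots> = (\<Sum>x\<in>F. \<epsilon> * (\<Sum>z\<in>Z. g z x) - (\<Sum>y\<in>cball x R. \<Sum>z\<in>Z. max (g z y - g z x) 0))"
    by (subst sum.swap) (simp add: sum_subtractf sum_distrib_left sum.swap[of _ Z])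
  also have "\<dots> > 0"
    using transport by (intro sum_pos \<open>finite F\<close> \<open>F \<noteq> {}\<close>) auto
  finally have "0 < integral\<^sup>L lborel L" .
  then obtain t where "0 < L t"
    using Bochner_Integration.integral_nonneg[of lborel "\<lambda>t. - L t"] by (force simp: not_less)
  have "0 < t"
  proof (rule ccontr)
    assume "\<not> 0 < t"
    then have "\<not> g z x < t" for z x using nonneg[of z x] by linarith
    then have "L t = 0" using \<open>\<not> 0 < t\<close> by (simp add: L_def indicator_def)
    with \<open>0 < L t\<close> show False by simp
  qed
  have "L t \<le> (\<Sum>z\<in>Z. \<epsilon> * real (card ({x. t \<le> g z x} \<inter> F))
      - real (card (rbdry UNIV R {x. t \<le> g z x} \<inter> F)))"
    unfolding L_def
  proof (rule sum_mono)
    fix z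
    show "(\<Sum>x\<in>F. \<epsilon> * indicator {0<..g z x} t - (\<Sum>y\<in>cball x R. indicator {g z x<..g z y} t))
        \<le> \<epsilon> * real (card ({x. t \<le> g z x} \<inter> F)) - real (card (rbdry UNIV R {x. t \<le> g z x} \<inter> F))"
      using card_superlevel_set_eq_sum[OF \<open>finite F\<close> \<open>0 < t\<close>, of "g z"]
        card_rbdry_superlevel_set_le[OF \<open>finite F\<close> finite_superlevel[OF \<open>0 < t\<close>] finite_cball]
      by (simp add: sum_subtractf sum_distrib_left)
  qed
  with \<open>0 < L t\<close> obtain z where "0 < \<epsilon> * real (card ({x. t \<le> g z x} \<inter> F))
      - real (card (rbdry UNIV R {x. t \<le> g z x} \<inter> F))"
    by (meson less_le_trans not_le sum_nonpos)
  with \<open>0 < t\<close> show ?thesis by auto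
qed

lemma exists_bounded_set_small_boundary:
  fixes f :: "'a::metric_space \<Rightarrow> 'a \<Rightarrow> real" and F :: "'a set"
  assumes "finite F" "F \<noteq> {}" "0 \<le> R" "0 \<le> S"
    and finite_cball: "\<And>x::'a. finite (cball x R)"
    and card_cball: "\<And>x::'a. card (cball x R) \<le> NR"
    and finite_ball: "\<And>x::'a. finite (ball x S)"
    and nonneg: "\<And>z x. 0 \<le> f z x"
    and supp: "\<And>z x. f z x \<noteq> 0 \<Longrightarrow> z \<in> ball x S"
    and mass_one: "\<And>x. (\<Sum>z\<in>ball x S. f z x) = 1"
    and transport: "\<And>Z x y. finite Z \<Longrightarrow> dist x y \<le> R \<Longrightarrow> (\<Sum>z\<in>Z. max (f z y - f z x) 0) \<le> \<eta>"
    and "real NR * \<eta> < \<epsilon>"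
  shows "\<exists>E. bounded E \<and> diameter E \<le> 2 * S \<and>
    real (card (rbdry UNIV R E \<inter> F)) < \<epsilon> * real (card (E \<inter> F))"
proof -
  define Z where "Z = (\<Union>x\<in>F. \<Union>y\<in>cball x R. ball y S)"
  have "finite Z"
    unfolding Z_def using \<open>finite F\<close> by (intro finite_UN_I) (auto simp: finite_cball finite_ball)
  have superlevel_ball: "{x. t \<le> f z x} \<subseteq> ball z S" if "0 < t" for z t
    using that supp by (force simp: dist_commute)
  have "(\<Sum>y\<in>cball x R. \<Sum>z\<in>Z. max (f z y - f z x) 0) < \<epsilon> * (\<Sum>z\<in>Z. f z x)" if "x \<in> F" for x
  proof -
    have "0 \<le> \<eta>" using transport[of "{}" x x] \<open>0 \<le> R\<close> by simp
    have "(\<Sum>y\<in>cball x R. \<Sum>z\<in>Z. max (f z y - f z x) 0) \<le> real (card (cball x R)) * \<eta>"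
      using sum_mono[of "cball x R" _ "\<lambda>_. \<eta>"] transport[OF \<open>finite Z\<close>] by simp
    also have "\<dots> \<le> real NR * \<eta>"
      using card_cball[of x] \<open>0 \<le> \<eta>\<close> by (intro mult_right_mono) auto
    also have "\<dots> < \<epsilon>" by fact
    also have "\<epsilon> = \<epsilon> * (\<Sum>z\<in>Z. f z x)"
    proof -
      have "ball x S \<subseteq> Z" unfolding Z_def using \<open>x \<in> F\<close> \<open>0 \<le> R\<close> by force
      then have "(\<Sum>z\<in>Z. f z x) = (\<Sum>z\<in>ball x S. f z x)"
        using \<open>finite Z\<close> supp by (intro sum.mono_neutral_right) blast+
      with mass_one show ?thesis by simp
    qed
    finally show ?thesis .
  qed
  moreover have "finite {x. t \<le> f z x}" if "0 < t" for z t
    using superlevel_ball[OF that] finite_ball finite_subset by blast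
  ultimately obtain z t where "0 < t" and small:
    "real (card (rbdry UNIV R {x. t \<le> f z x} \<inter> F)) < \<epsilon> * real (card ({x. t \<le> f z x} \<inter> F))"
    using exists_superlevel_set_small_boundary[where g = f, OF \<open>finite Z\<close> \<open>finite F\<close> \<open>F \<noteq> {}\<close>
        nonneg _ finite_cball] by blast
  have "bounded {x. t \<le> f z x}" "diameter {x. t \<le> f z x} \<le> 2 * S"
    using superlevel_ball[OF \<open>0 < t\<close>] bounded_subset[OF bounded_ball] diameter_le_if_subset_ball
      \<open>0 \<le> S\<close> by blast+
  with small show ?thesis by blast
qed

lemma property_AD:
  assumes "property_A TYPE('a::metric_space)" "0 < R" "0 < \<epsilon>"
  shows "\<exists>(\<xi> :: 'a \<Rightarrow> 'a \<Rightarrow> real) S. 0 < S \<and> (\<forall>x. l2norm (\<xi> x) = 1) \<and>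
    (\<forall>x y. dist x y < R \<longrightarrow> l2norm (\<lambda>z. \<xi> x z - \<xi> y z) < \<epsilon>) \<and>
    (\<forall>x. {z. \<xi> x z \<noteq> 0} \<subseteq> ball x S)"
  using assms(1)[unfolded property_A_def, rule_format, OF assms(2,3)] by blast

lemma uniformly_locally_amenable_if_property_A:
  assumes bg: "bounded_geometry TYPE('a::metric_space)" and "property_A TYPE('a)"
  shows "uniformly_locally_amenable TYPE('a)"
  unfolding uniformly_locally_amenable_def
proof (intro allI impI)
  fix R \<epsilon> :: real
  assume "0 < R" "0 < \<epsilon>"
  obtain NR where finite_cball: "\<And>x::'a. finite (cball x R)"
    and card_cball: "\<And>x::'a. card (cball x R) \<le> NR"
    using bounded_geometryE[OF bg \<open>0 < R\<close>] by blast
  define \<delta> where "\<delta> = \<epsilon> / (2 * (real NR + 1))"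
  have "0 < \<delta>" "real NR * (2 * \<delta>) < \<epsilon>"
    using \<open>0 < \<epsilon>\<close> by (simp_all add: \<delta>_def field_simps)
  \<comment> \<open>Scale \<open>R + 1\<close>: Property A controls pairs with \<open>dist x y < R + 1\<close>, which includes the
    closed balls \<open>cball x R\<close> defining the boundary.\<close>
  have "0 < R + 1" using \<open>0 < R\<close> by simp
  obtain \<xi> :: "'a \<Rightarrow> 'a \<Rightarrow> real" and S where "0 < S" and norm_one: "\<And>x. l2norm (\<xi> x) = 1"
    and close: "\<And>x y. dist x y < R + 1 \<Longrightarrow> l2norm (\<lambda>z. \<xi> x z - \<xi> y z) < \<delta>"
    and supp: "\<And>x. {z. \<xi> x z \<noteq> 0} \<subseteq> ball x S"
    using property_AD[OF assms(2) \<open>0 < R + 1\<close> \<open>0 < \<delta>\<close>] by blast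
  obtain NS where "\<And>x::'a. finite (cball x S)"
    using bounded_geometryE[OF bg \<open>0 < S\<close>] by blast
  then have finite_ball: "finite (ball x S)" for x :: 'a
    by (meson ball_subset_cball finite_subset)
  have finite_supp: "finite {z. \<xi> x z \<noteq> 0}" for x
    using supp finite_ball finite_subset by blast
  have mass_one: "(\<Sum>z\<in>ball x S. (\<xi> x z)\<^sup>2) = 1" for x
    using sum_squares_eq_l2norm[OF finite_ball supp] norm_one by simp
  have transport: "(\<Sum>z\<in>Z. max ((\<xi> y z)\<^sup>2 - (\<xi> x z)\<^sup>2) 0) \<le> 2 * \<delta>"
    if "finite Z" "dist x y \<le> R" for Z x y
  proof -
    have "dist x y < R + 1" using that(2) by simp
    then show ?thesis
      using close[of x y] sum_max_diff_squares_le[OF that(1) finite_supp[of x] finite_supp[of y]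
          norm_one[of x] norm_one[of y]] by linarith
  qed
  have "\<exists>E. bounded E \<and> diameter E \<le> 2 * S \<and>
    real (card (rbdry UNIV R E \<inter> F)) < \<epsilon> * real (card (E \<inter> F))"
    if "finite F" "F \<noteq> {}" for F :: "'a set"
  proof (rule exists_bounded_set_small_boundary[where f = "\<lambda>z x. (\<xi> x z)\<^sup>2" and \<eta> = "2 * \<delta>"])
    show "z \<in> ball x S" if "(\<xi> x z)\<^sup>2 \<noteq> 0" for z x
      using that supp[of x] by auto
  qed (use that \<open>0 < R\<close> \<open>0 < S\<close> finite_cball card_cball finite_ball mass_one transport
      \<open>real NR * (2 * \<delta>) < \<epsilon>\<close> in auto)
  with \<open>0 < S\<close> show "\<exists>S'>0. \<forall>F::'a set. finite F \<and> F \<noteq> {} \<longrightarrow> (\<exists>E. bounded E \<and>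
      diameter E \<le> S' \<and> real (card (rbdry UNIV R E \<inter> F)) < \<epsilon> * real (card (E \<inter> F)))"
    by (intro exI[of _ "2 * S"]) auto
qed

theorem theorem4p4:
  fixes Xs :: "nat \<Rightarrow> 'a::metric_space set"
  assumes "bounded_geometry TYPE('a)"
    and "coarse_disjoint_union Xs"
    and "asymptotic_expanders Xs"
  shows "\<not> uniformly_locally_amenable TYPE('a) \<and> \<not> property_A TYPE('a)"
  using not_uniformly_locally_amenable_if_asymptotic_expanders[OF assms(1,3)]
    uniformly_locally_amenable_if_property_A[OF assms(1)] by blast

end
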